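(* Let $\mathbf{p}=(p^{(1)},\dots,p^{(n)})\in(0,1)^n$ with $\sum_ip^{(i)}=1$, and let $f_u(C^{(i)},C^{(j)})=p^{(i)}/(p^{(i)}+p^{(j)})$ for distinct $i,j$. For each $a\in[n]$ define the prefix weights $g_a$ on ordered pairs of distinct classes by $g_a(C^{(a)},C^{(b)})=1$ and $g_a(C^{(b)},C^{(a)})=0$ for $b\ne a$, and $g_a(C^{(b)},C^{(c)})=f_u(C^{(b)},C^{(c)})$ for distinct $b,c\ne a$. Then for all distinct $i,j\in[n]$, $$f_u(C^{(i)},C^{(j)})=\sum_{a=1}^n p^{(a)}\,g_a(C^{(i)},C^{(j)}).$$
   Context: $C^{(1)},\dots,C^{(n)}$ are class labels; $f_u$ are the situational expert graph weights and $g_a$ are the weights of the prefix expert graph with prefix $a$. *)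

theory Defs
  imports Main "HOL.Real"
begin

text \<open>Classes C^(1),...,C^(n) are identified with their indices 1..n.
  Situational expert graph weight: f_u(C_i, C_j) = p_i / (p_i + p_j).\<close>
definition f_u :: "(nat \<Rightarrow> real) \<Rightarrow> nat \<Rightarrow> nat \<Rightarrow> real" where
  "f_u p i j = p i / (p i + p j)"

definition g :: "(nat \<Rightarrow> real) \<Rightarrow> nat \<Rightarrow> nat \<Rightarrow> nat \<Rightarrow> real" where
  "g p a i j = (if i = a then 1 else if j = a then 0 else f_u p i j)"

end

theory Submission
  imports Defs
begin

text \<open>Averaging the prefix graphs with weights p: the prefix i contributes p i,
  the prefix j contributes 0, and every other prefix contributes f_u p i j.
  Hence the average is p i + (S - p i - p j) f_u p i j with S the total weight,
  and this equals S f_u p i j because (p i + p j) f_u p i j = p i.\<close>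

lemma sum_weighted_g_split:
  assumes "finite A" "i \<in> A" "j \<in> A" "i \<noteq> j"
  shows "(\<Sum>a\<in>A. p a * g p a i j) = p i + (sum p A - p i - p j) * f_u p i j"
proof -
  let ?R = "A - {i} - {j}"
  have sum_R: "(\<Sum>a\<in>?R. p a * g p a i j) = sum p ?R * f_u p i j"
    by (simp add: g_def sum_distrib_right)
  have "sum p A = p i + p j + sum p ?R"
    using assms by (simp add: sum.remove)
  moreover have "(\<Sum>a\<in>A. p a * g p a i j)
      = p i * g p i i j + p j * g p j i j + (\<Sum>a\<in>?R. p a * g p a i j)"
    using assms by (simp add: sum.remove[of A i] sum.remove[of "A - {i}" j])
  ultimately show ?thesis
    using sum_R \<open>i \<noteq> j\<close> by (simp add: g_def algebra_simps)
qed

lemma f_u_mult_sum: "p i + p j \<noteq> 0 \<Longrightarrow> (p i + p j) * f_u p i j = p i"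
  by (simp add: f_u_def)

lemma sum_weighted_g:
  assumes "finite A" "i \<in> A" "j \<in> A" "i \<noteq> j" "p i + p j \<noteq> 0"
  shows "(\<Sum>a\<in>A. p a * g p a i j) = sum p A * f_u p i j"
  using sum_weighted_g_split[OF assms(1-4), of p] f_u_mult_sum[OF assms(5)]
  by (simp add: algebra_simps)

theorem lemma9:
  fixes n :: nat and p :: "nat \<Rightarrow> real"
  assumes "\<And>i. i \<in> {1..n} \<Longrightarrow> 0 < p i \<and> p i < 1"
    and "(\<Sum>i=1..n. p i) = 1"
  shows "\<forall>i\<in>{1..n}. \<forall>j\<in>{1..n}. i \<noteq> j \<longrightarrow>
           f_u p i j = (\<Sum>a=1..n. p a * g p a i j)"
proof (intro ballI impI)
  fix i j assume i: "i \<in> {1..n}" and j: "j \<in> {1..n}" and "i \<noteq> j"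
  moreover have "p i + p j \<noteq> 0"
    using assms(1)[OF i] assms(1)[OF j] by linarith
  ultimately show "f_u p i j = (\<Sum>a=1..n. p a * g p a i j)"
    using sum_weighted_g[of "{1..n}" i j p] assms(2) by simp
qed

end
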